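(* Let $d\ge2$, $l>0$, $\lambda\ne0$, and constants $a,b\in\mathbb R$, $b>0$, $z_0\in\mathbb R^d$. On $\mathbb H_{d+1}$ with metric $ds^2=\frac{l^2}{z^2}(dz^2+dz^idz^i)$, $z>0$, define on the set where the right-hand side is positive $$\phi^{2/(d-1)}=\frac{d-1}{l\sqrt{|\lambda|}}\,\frac{bz}{-\mathrm{sgn}(\lambda)b^2+(z+a)^2+|\vec z-\vec z_0|^2}.$$ Then $\mathcal T_{\mu\nu}=0$, $R_{\mu\nu}+\frac d{l^2}g_{\mu\nu}=0$ and $\square_g\phi-\frac{d-1}{4d}R\phi-\frac{d+1}{d-1}\lambda\phi^{\frac{d+3}{d-1}}=0$, so $(g,\phi)$ solves the equations of motion of the conformally coupled scalar. Moreover, with $z=e^{-r/l}$, as $r\to\infty$, $$\phi=e^{-\frac{(d-1)r}{2l}}\phi_-(\vec z)-l\alpha\,e^{-\frac{(d+1)r}{2l}}\phi_-(\vec z)^{\frac{d+1}{d-1}}+\dots,\qquad \alpha=\frac{\sqrt{|\lambda|}\,a}{b},\qquad \phi_-^{2/(d-1)}=\frac{d-1}{l\sqrt{|\lambda|}}\frac{b}{-\mathrm{sgn}(\lambda)b^2+a^2+|\vec z-\vec z_0|^2},$$ so that $\hat\pi_{(\Delta_+)}:=-\frac1l\phi_+=\alpha\phi_-^{\frac{d+1}{d-1}}$ and the solution satisfies the mixed boundary condition $-\hat\pi_{(\Delta_+)}-f'(\phi_-)=0$ with $f(\phi_-)=-\alpha\frac{d-1}{2d}\phi_-^{\frac{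2d}{d-1}}$.
   Context: $\mathcal T_{\mu\nu}=\frac{(d-1)^2}{4d}\frac{\phi^{2d/(d-1)}}{1-\frac{(d-1)\kappa^2}{4d}\phi^2}\big(\nabla_\mu\nabla_\nu-\frac1{d+1}g_{\mu\nu}\square_g\big)\phi^{-2/(d-1)}$. The equations of motion of the conformally coupled scalar (action $\int\sqrt g(-\frac{1}{2\kappa^2}(R+\frac{d(d-1)}{l^2})+\frac12(\partial\phi)^2+\frac{d-1}{8d}R\phi^2+\frac\lambda2\phi^{2(d+1)/(d-1)})$) are $R_{\mu\nu}+\frac d{l^2}g_{\mu\nu}=\kappa^2\mathcal T_{\mu\nu}$ and $\square_g\phi-\frac{d-1}{4d}R\phi-\frac{d+1}{d-1}\lambda\phi^{(d+3)/(d-1)}=0$. $\phi_+$ denotes the coefficient of $e^{-(d+1)r/2l}$ in the expansion. *)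

theory Defs
  imports "HOL-Analysis.Analysis" "HOL-Library.Landau_Symbols"
begin

text \<open>Coordinates are taken with respect to the standard orthonormal Basis of the
euclidean space 'a.  Tensors are indexed by basis vectors.  A metric is given by
its components g x i j and its inverse by gi x i j (both at the point x).\<close>

definition pd :: "('a::euclidean_space \<Rightarrow> real) \<Rightarrow> 'a \<Rightarrow> 'a \<Rightarrow> real" where
  "pd f e x = deriv (\<lambda>t. f (x + t *\<^sub>R e)) 0"

definition christoffel ::
  "('a::euclidean_space \<Rightarrow> 'a \<Rightarrow> 'a \<Rightarrow> real) \<Rightarrow> ('a \<Rightarrow> 'a \<Rightarrow> 'a \<Rightarrow> real)
     \<Rightarrow> 'a \<Rightarrow> 'a \<Rightarrow> 'a \<Rightarrow> 'a \<Rightarrow> real" where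
  "christoffel g gi k i j x =
     (1/2) * (\<Sum>m\<in>Basis. gi x k m *
        (pd (\<lambda>y. g y m j) i x + pd (\<lambda>y. g y m i) j x - pd (\<lambda>y. g y i j) m x))"

text \<open>Ricci tensor, convention R_ij = d_k G^k_ij - d_j G^k_ik + G^k_kp G^p_ij - G^k_jp G^p_ik
(positive on spheres, equal to -(d/l^2) g on hyperbolic (d+1)-space of radius l).\<close>
definition ricci ::
  "('a::euclidean_space \<Rightarrow> 'a \<Rightarrow> 'a \<Rightarrow> real) \<Rightarrow> ('a \<Rightarrow> 'a \<Rightarrow> 'a \<Rightarrow> real)
     \<Rightarrow> 'a \<Rightarrow> 'a \<Rightarrow> 'a \<Rightarrow> real" where
  "ricci g gi i j x =
     (\<Sum>k\<in>Basis. pd (\<lambda>y. christoffel g gi k i j y) k x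
                 - pd (\<lambda>y. christoffel g gi k i k y) j x)
   + (\<Sum>k\<in>Basis. \<Sum>p\<in>Basis.
        christoffel g gi k k p x * christoffel g gi p i j x
      - christoffel g gi k j p x * christoffel g gi p i k x)"

definition scalar_curv ::
  "('a::euclidean_space \<Rightarrow> 'a \<Rightarrow> 'a \<Rightarrow> real) \<Rightarrow> ('a \<Rightarrow> 'a \<Rightarrow> 'a \<Rightarrow> real) \<Rightarrow> 'a \<Rightarrow> real" where
  "scalar_curv g gi x = (\<Sum>i\<in>Basis. \<Sum>j\<in>Basis. gi x i j * ricci g gi i j x)"

definition hess ::
  "('a::euclidean_space \<Rightarrow> 'a \<Rightarrow> 'a \<Rightarrow> real) \<Rightarrow> ('a \<Rightarrow> 'a \<Rightarrow> 'a \<Rightarrow> real)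
     \<Rightarrow> ('a \<Rightarrow> real) \<Rightarrow> 'a \<Rightarrow> 'a \<Rightarrow> 'a \<Rightarrow> real" where
  "hess g gi f i j x = pd (\<lambda>y. pd f j y) i x - (\<Sum>k\<in>Basis. christoffel g gi k i j x * pd f k x)"

definition box ::
  "('a::euclidean_space \<Rightarrow> 'a \<Rightarrow> 'a \<Rightarrow> real) \<Rightarrow> ('a \<Rightarrow> 'a \<Rightarrow> 'a \<Rightarrow> real)
     \<Rightarrow> ('a \<Rightarrow> real) \<Rightarrow> 'a \<Rightarrow> real" where
  "box g gi f x = (\<Sum>i\<in>Basis. \<Sum>j\<in>Basis. gi x i j * hess g gi f i j x)"

text \<open>The tensor T_{mu nu} of the conformally coupled scalar (d = boundary dimension).\<close>
definition stressT ::
  "('a::euclidean_space \<Rightarrow> 'a \<Rightarrow> 'a \<Rightarrow> real) \<Rightarrow> ('a \<Rightarrow> 'a \<Rightarrow> 'a \<Rightarrow> real)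
     \<Rightarrow> real \<Rightarrow> real \<Rightarrow> ('a \<Rightarrow> real) \<Rightarrow> 'a \<Rightarrow> 'a \<Rightarrow> 'a \<Rightarrow> real" where
  "stressT g gi d \<kappa> \<phi> i j x =
     ((d - 1)^2 / (4 * d)) * (\<phi> x powr (2 * d / (d - 1)))
       / (1 - (d - 1) * \<kappa>^2 / (4 * d) * (\<phi> x)^2)
     * (hess g gi (\<lambda>y. \<phi> y powr (-2 / (d - 1))) i j x
        - (1 / (d + 1)) * g x i j * box g gi (\<lambda>y. \<phi> y powr (-2 / (d - 1))) x)"

section \<open>Hyperbolic space H_{d+1}: points (z, zvec) with z > 0\<close>

definition hyp_g :: "real \<Rightarrow> real \<times> 'b::euclidean_space \<Rightarrow> real \<times> 'b \<Rightarrow> real \<times> 'b \<Rightarrow> real" where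
  "hyp_g l x u v = l^2 / (fst x)^2 * (u \<bullet> v)"

definition hyp_gi :: "real \<Rightarrow> real \<times> 'b::euclidean_space \<Rightarrow> real \<times> 'b \<Rightarrow> real \<times> 'b \<Rightarrow> real" where
  "hyp_gi l x u v = (fst x)^2 / l^2 * (u \<bullet> v)"

definition phi_rhs :: "real \<Rightarrow> real \<Rightarrow> real \<Rightarrow> real \<Rightarrow> real \<Rightarrow> 'b::euclidean_space \<Rightarrow> real \<times> 'b \<Rightarrow> real" where
  "phi_rhs d l lam a b z0 x =
     (d - 1) / (l * sqrt \<bar>lam\<bar>) * (b * fst x)
       / (- sgn lam * b^2 + (fst x + a)^2 + (norm (snd x - z0))^2)"

definition conf_phi :: "real \<Rightarrow> real \<Rightarrow> real \<Rightarrow> real \<Rightarrow> real \<Rightarrow> 'b::euclidean_space \<Rightarrow> real \<times> 'b \<Rightarrow> real" where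
  "conf_phi d l lam a b z0 x = phi_rhs d l lam a b z0 x powr ((d - 1) / 2)"

definition sol_domain :: "real \<Rightarrow> real \<Rightarrow> real \<Rightarrow> real \<Rightarrow> real \<Rightarrow> 'b::euclidean_space \<Rightarrow> (real \<times> 'b) set" where
  "sol_domain d l lam a b z0 = {x. fst x > 0 \<and> phi_rhs d l lam a b z0 x > 0}"

definition phi_minus :: "real \<Rightarrow> real \<Rightarrow> real \<Rightarrow> real \<Rightarrow> real \<Rightarrow> 'b::euclidean_space \<Rightarrow> 'b \<Rightarrow> real" where
  "phi_minus d l lam a b z0 zv =
     ((d - 1) / (l * sqrt \<bar>lam\<bar>) * b / (- sgn lam * b^2 + a^2 + (norm (zv - z0))^2))
       powr ((d - 1) / 2)"

end

theory Submission
  imports Defs "HOL-Real_Asymp.Real_Asymp"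
begin

text \<open>
Put u = phi powr (-2 / (d - 1)). On the solution domain u is hyp_affine K a A z0 with
K = (d - 1) b / (l sqrt |lam|) and A = a^2 - sgn lam b^2, and up to the additive constant 2a/K
this is the restriction to H_(d+1) of a linear function L of the Minkowski space in which
H_(d+1) is a hyperboloid. Such an L satisfies nabla nabla L = (L / l^2) g and
l^2 |dL|^2 - L^2 = const, here -4A/K^2. The first identity says that the traceless Hessian of u,
which is T up to a factor, vanishes. For the scalar equation write phi = u powr (-(d - 1) / 2):
the chain rule for box, both identities and R = -d (d + 1) / l^2 reduce it to
(d^2 - 1) / (4 l^2) * 4 sgn lam b^2 / K^2 = (d + 1) lam / (d - 1), which is what fixes K.
At z = exp (-r / l) the field equals z powr p * (K / (z^2 + 2 a z + D)) powr p with
p = (d - 1) / 2 and D = a^2 - sgn lam b^2 + |zvec - z0|^2, and the first-order Taylor expansion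
of the second factor at z = 0 gives phi_- and phi_+ = -(d - 1) a / D * phi_-.
\<close>

section \<open>Locality and the chain rule for covariant derivatives\<close>

lemma pd_eq_has_derivative:
  assumes "(f has_derivative f') (at x)"
  shows "pd f e x = f' e"
proof -
  have "((\<lambda>t::real. x + t *\<^sub>R e) has_derivative (\<lambda>t. t *\<^sub>R e)) (at 0)"
    by (auto intro!: derivative_eq_intros)
  from diff_chain_at[OF this] assms
  have "((f \<circ> (\<lambda>t::real. x + t *\<^sub>R e)) has_derivative (f' \<circ> (\<lambda>t. t *\<^sub>R e))) (at 0)"
    by simp
  moreover have "f' \<circ> (\<lambda>t. t *\<^sub>R e) = (*) (f' e)"
    using has_derivative_linear[OF assms] by (auto simp: linear_scale o_def mult.commute)
  ultimately have "((\<lambda>t. f (x + t *\<^sub>R e)) has_field_derivative f' e) (at 0)"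
    by (simp add: has_field_derivative_def o_def)
  then show ?thesis unfolding pd_def by (rule DERIV_imp_deriv)
qed

lemma pd_eq_on_open:
  assumes "open S" "x \<in> S" "\<And>y. y \<in> S \<Longrightarrow> f y = g y"
  shows "pd f e x = pd g e x"
proof -
  have "open ((\<lambda>t::real. x + t *\<^sub>R e) -` S)"
    by (rule continuous_open_vimage[OF assms(1)]) (intro continuous_intros)
  then have "eventually (\<lambda>t. f (x + t *\<^sub>R e) = g (x + t *\<^sub>R e)) (nhds (0::real))"
    unfolding eventually_nhds using assms(2,3) by force
  then show ?thesis unfolding pd_def by (rule deriv_cong_ev) simp
qed

lemma hess_eq_on_open:
  assumes "open S" "x \<in> S" "\<And>y. y \<in> S \<Longrightarrow> F y = G y"
  shows "hess g gi F i j x = hess g gi G i j x"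
proof -
  have pd_eq: "pd F k y = pd G k y" if "y \<in> S" for k y
    using pd_eq_on_open[OF assms(1) that assms(3)] .
  then have "pd (\<lambda>y. pd F j y) i x = pd (\<lambda>y. pd G j y) i x"
    by (rule pd_eq_on_open[OF assms(1,2)])
  then show ?thesis
    unfolding hess_def using pd_eq[OF assms(2)] by presburger
qed

lemma box_eq_on_open:
  assumes "open S" "x \<in> S" "\<And>y. y \<in> S \<Longrightarrow> F y = G y"
  shows "box g gi F x = box g gi G x"
  unfolding box_def using hess_eq_on_open[OF assms] by presburger

lemma hess_compose:
  assumes S: "open S" "x \<in> S"
    and F: "\<And>y. y \<in> S \<Longrightarrow> (F has_derivative DF y) (at y)"
    and DF: "((\<lambda>y. DF y j) has_derivative D2F) (at x)"
    and G: "\<And>y. y \<in> S \<Longrightarrow> (G has_real_derivative G1 (F y)) (at (F y))"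
    and G1: "(G1 has_real_derivative G2) (at (F x))"
  shows "hess g gi (\<lambda>y. G (F y)) i j x
           = G1 (F x) * hess g gi F i j x + G2 * DF x i * DF x j"
proof -
  have pdF: "pd F k y = DF y k" if "y \<in> S" for y k
    using F[OF that] by (rule pd_eq_has_derivative)
  have pdGF: "pd (\<lambda>y. G (F y)) k y = G1 (F y) * DF y k" if "y \<in> S" for y k
  proof -
    have "((\<lambda>y. G (F y)) has_derivative (\<lambda>h. G1 (F y) * DF y h)) (at y)"
      using has_derivative_compose[OF F[OF that] G[OF that, unfolded has_field_derivative_def]] .
    then show ?thesis by (rule pd_eq_has_derivative)
  qed
  have "((\<lambda>y. G1 (F y)) has_derivative (\<lambda>h. G2 * DF x h)) (at x)"
    using has_derivative_compose[OF F[OF S(2)] G1[unfolded has_field_derivative_def]] .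
  from has_derivative_mult[OF this DF]
  have "pd (\<lambda>y. G1 (F y) * DF y j) i x = G1 (F x) * D2F i + G2 * DF x i * DF x j"
    by (rule pd_eq_has_derivative[THEN trans]) simp
  then have "pd (\<lambda>y. pd (\<lambda>y. G (F y)) j y) i x = G1 (F x) * D2F i + G2 * DF x i * DF x j"
    using pd_eq_on_open[OF S pdGF] by simp
  moreover have "pd (\<lambda>y. pd F j y) i x = D2F i"
    using pd_eq_on_open[OF S pdF] pd_eq_has_derivative[OF DF] by simp
  ultimately show ?thesis
    unfolding hess_def pdGF[OF S(2)] pdF[OF S(2)]
    by (simp add: algebra_simps sum_distrib_left)
qed

lemma box_compose:
  assumes S: "open S" "x \<in> S"
    and F: "\<And>y. y \<in> S \<Longrightarrow> (F has_derivative DF y) (at y)"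
    and DF: "\<And>j. ((\<lambda>y. DF y j) has_derivative D2F j) (at x)"
    and G: "\<And>y. y \<in> S \<Longrightarrow> (G has_real_derivative G1 (F y)) (at (F y))"
    and G1: "(G1 has_real_derivative G2) (at (F x))"
  shows "box g gi (\<lambda>y. G (F y)) x
           = G1 (F x) * box g gi F x
             + G2 * (\<Sum>i\<in>Basis. \<Sum>j\<in>Basis. gi x i j * DF x i * DF x j)"
proof -
  have "gi x i j * hess g gi (\<lambda>y. G (F y)) i j x
          = G1 (F x) * (gi x i j * hess g gi F i j x) + G2 * (gi x i j * DF x i * DF x j)"
    for i j
    using hess_compose[OF S F DF[of j] G G1, of g gi i] by (simp add: algebra_simps)
  then show ?thesis
    unfolding box_def by (simp add: sum.distrib sum_distrib_left)
qed

section \<open>Curvature and Hessians of hyperbolic space\<close>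

lemma sum_Basis_inner_mult:
  fixes a :: "'a::euclidean_space"
  assumes "a \<in> Basis"
  shows "(\<Sum>k\<in>Basis. (k \<bullet> a) * F k) = F a"
proof -
  have "(\<Sum>k\<in>Basis. (k \<bullet> a) * F k) = (\<Sum>k\<in>Basis. if k = a then F k else 0)"
    by (rule sum.cong) (auto simp: inner_Basis assms)
  then show ?thesis using assms by simp
qed

lemma sum_Basis_fst_mult:
  "(\<Sum>k\<in>(Basis :: (real \<times> 'b::euclidean_space) set). fst k * F k) = F (1, 0)"
proof -
  have "fst k = k \<bullet> (1, 0)" for k :: "real \<times> 'b"
    by (cases k) (simp add: inner_prod_def)
  moreover have "((1::real), 0::'b) \<in> Basis"
    by (simp add: Basis_prod_def)
  ultimately show ?thesis
    using sum_Basis_inner_mult[of "(1, 0)"] by simp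
qed

lemma open_fst_pos: "open {y :: real \<times> 'b::real_normed_vector. fst y > 0}"
  by (intro open_Collect_less continuous_intros)

definition hyp_gamma :: "real \<times> 'b::euclidean_space \<Rightarrow> real \<times> 'b \<Rightarrow> real \<times> 'b \<Rightarrow> real" where
  "hyp_gamma k i j = fst i * (k \<bullet> j) + fst j * (k \<bullet> i) - fst k * (i \<bullet> j)"

lemma christoffel_hyp:
  fixes y :: "real \<times> 'b::euclidean_space"
  assumes "fst y \<noteq> 0" "l \<noteq> 0" "k \<in> Basis"
  shows "christoffel (hyp_g l) (hyp_gi l) k i j y = - hyp_gamma k i j / fst y"
proof -
  have "pd (\<lambda>y. hyp_g l y m n) e y = - 2 * l^2 * (m \<bullet> n) * fst e / (fst y)^3" for m n e
  proof -
    have "((\<lambda>y. l^2 / (fst y)^2 * (m \<bullet> n)) has_derivative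
            (\<lambda>e. - 2 * l^2 * (m \<bullet> n) * fst e / (fst y)^3)) (at y)"
      using assms(1) by (auto intro!: derivative_eq_intros simp: field_simps eval_nat_numeral)
    then show ?thesis
      unfolding hyp_g_def by (rule pd_eq_has_derivative)
  qed
  then have "christoffel (hyp_g l) (hyp_gi l) k i j y
      = (1/2) * (\<Sum>m\<in>Basis. (m \<bullet> k) * ((fst y)^2 / l^2 *
          (- 2 * l^2 * (m \<bullet> j) * fst i / (fst y)^3 - 2 * l^2 * (m \<bullet> i) * fst j / (fst y)^3
           + 2 * l^2 * (i \<bullet> j) * fst m / (fst y)^3)))"
    unfolding christoffel_def hyp_gi_def by (simp add: inner_commute ac_simps)
  also have "\<dots> = - hyp_gamma k i j / fst y"
    unfolding sum_Basis_inner_mult[OF assms(3)]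
    using assms by (simp add: hyp_gamma_def field_simps eval_nat_numeral)
  finally show ?thesis .
qed

lemma hyp_gamma_sum_first:
  fixes i j :: "real \<times> 'b::euclidean_space"
  assumes "i \<in> Basis" "j \<in> Basis"
  shows "(\<Sum>k\<in>Basis. hyp_gamma k i j * G k) = fst i * G j + fst j * G i - (i \<bullet> j) * G (1, 0)"
proof -
  have "(\<Sum>k\<in>Basis. hyp_gamma k i j * G k) = (\<Sum>k\<in>Basis. (k \<bullet> j) * (fst i * G k))
      + (\<Sum>k\<in>Basis. (k \<bullet> i) * (fst j * G k)) - (\<Sum>k\<in>Basis. fst k * ((i \<bullet> j) * G k))"
    unfolding sum.distrib[symmetric] sum_subtractf[symmetric]
    by (rule sum.cong) (auto simp: hyp_gamma_def algebra_simps)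
  then show ?thesis
    by (simp only: sum_Basis_inner_mult[OF assms(1)] sum_Basis_inner_mult[OF assms(2)]
        sum_Basis_fst_mult)
qed

lemma hyp_gamma_sum_last:
  fixes k j :: "real \<times> 'b::euclidean_space"
  assumes "k \<in> Basis" "j \<in> Basis"
  shows "(\<Sum>p\<in>Basis. hyp_gamma k j p * G p) = fst j * G k + (k \<bullet> j) * G (1, 0) - fst k * G j"
proof -
  have "(\<Sum>p\<in>Basis. hyp_gamma k j p * G p) = (\<Sum>p\<in>Basis. (p \<bullet> k) * (fst j * G p))
      + (\<Sum>p\<in>Basis. fst p * ((k \<bullet> j) * G p)) - (\<Sum>p\<in>Basis. (p \<bullet> j) * (fst k * G p))"
    unfolding sum.distrib[symmetric] sum_subtractf[symmetric]
    by (rule sum.cong) (auto simp: hyp_gamma_def algebra_simps inner_commute)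
  then show ?thesis
    by (simp only: sum_Basis_inner_mult[OF assms(1)] sum_Basis_inner_mult[OF assms(2)]
        sum_Basis_fst_mult)
qed

lemma hyp_gamma_trace:
  fixes k i :: "real \<times> 'b::euclidean_space"
  assumes "k \<in> Basis"
  shows "hyp_gamma k i k = fst i" and "hyp_gamma k k i = fst i"
  using assms by (simp_all add: hyp_gamma_def inner_Basis inner_commute)

lemma ricci_hyp_eq_gamma_sums:
  fixes x :: "real \<times> 'b::euclidean_space"
  assumes "fst x > 0" "l \<noteq> 0"
  shows "ricci (hyp_g l) (hyp_gi l) i j x
           = ((\<Sum>k\<in>Basis. fst k * hyp_gamma k i j) - (\<Sum>k\<in>Basis. hyp_gamma k i k) * fst j
              + (\<Sum>k\<in>Basis. \<Sum>p\<in>Basis. hyp_gamma k k p * hyp_gamma p i j)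
              - (\<Sum>k\<in>Basis. \<Sum>p\<in>Basis. hyp_gamma k j p * hyp_gamma p i k)) / (fst x)^2"
proof -
  have pd_chr: "pd (\<lambda>y. christoffel (hyp_g l) (hyp_gi l) k i' j' y) e x
                  = hyp_gamma k i' j' * fst e / (fst x)^2" if "k \<in> Basis" for k i' j' e
  proof -
    have "((\<lambda>y. - hyp_gamma k i' j' / fst y) has_derivative
            (\<lambda>e. hyp_gamma k i' j' * fst e / (fst x)^2)) (at x)"
      using assms(1) by (auto intro!: derivative_eq_intros simp: field_simps power2_eq_square)
    then have "pd (\<lambda>y. - hyp_gamma k i' j' / fst y) e x = hyp_gamma k i' j' * fst e / (fst x)^2"
      by (rule pd_eq_has_derivative)
    moreover have "pd (\<lambda>y. christoffel (hyp_g l) (hyp_gi l) k i' j' y) e x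
                     = pd (\<lambda>y. - hyp_gamma k i' j' / fst y) e x"
      by (rule pd_eq_on_open[OF open_fst_pos])
         (use assms that in \<open>simp_all add: christoffel_hyp\<close>)
    ultimately show ?thesis by simp
  qed
  have chr: "christoffel (hyp_g l) (hyp_gi l) k i' j' x = - hyp_gamma k i' j' / fst x"
    if "k \<in> Basis" for k i' j'
    using christoffel_hyp[of x l k i' j'] assms that by simp
  have "ricci (hyp_g l) (hyp_gi l) i j x =
     (\<Sum>k\<in>Basis. fst k * hyp_gamma k i j / (fst x)^2 - hyp_gamma k i k * fst j / (fst x)^2)
     + (\<Sum>k\<in>Basis. \<Sum>p\<in>Basis. hyp_gamma k k p * hyp_gamma p i j / (fst x)^2
                                - hyp_gamma k j p * hyp_gamma p i k / (fst x)^2)"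
    unfolding ricci_def
    by (intro arg_cong2[where f="(+)"] sum.cong refl)
       (auto simp: pd_chr chr mult.commute power2_eq_square)
  then show ?thesis
    by (simp add: sum_subtractf sum_divide_distrib sum_distrib_right diff_divide_distrib
        add_divide_distrib)
qed

lemma ricci_hyp:
  fixes x :: "real \<times> 'b::euclidean_space"
  assumes "fst x > 0" "l \<noteq> 0" "i \<in> Basis" "j \<in> Basis"
  shows "ricci (hyp_g l) (hyp_gi l) i j x = - real DIM('b) / l^2 * hyp_g l x i j"
proof -
  define n where "n = real DIM('b) + 1"
  have "(\<Sum>k\<in>Basis. hyp_gamma k i k) = (\<Sum>k\<in>(Basis :: (real \<times> 'b) set). fst i)"
    by (rule sum.cong) (simp_all add: hyp_gamma_trace)
  then have trace: "(\<Sum>k\<in>Basis. hyp_gamma k i k) = n * fst i"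
    by (simp add: n_def)
  have "(\<Sum>k\<in>Basis. \<Sum>p\<in>Basis. hyp_gamma k k p * hyp_gamma p i j)
      = (\<Sum>k\<in>(Basis :: (real \<times> 'b) set). \<Sum>p\<in>Basis. fst p * hyp_gamma p i j)"
    by (intro sum.cong refl) (simp add: hyp_gamma_trace)
  then have contracted: "(\<Sum>k\<in>Basis. \<Sum>p\<in>Basis. hyp_gamma k k p * hyp_gamma p i j)
      = n * hyp_gamma (1, 0) i j"
    by (simp add: sum_Basis_fst_mult n_def)
  have "(\<Sum>k\<in>Basis. \<Sum>p\<in>Basis. hyp_gamma k j p * hyp_gamma p i k)
      = (\<Sum>k\<in>Basis. fst j * fst i + (k \<bullet> j) * hyp_gamma (1, 0) i k - fst k * hyp_gamma j i k)"
    by (rule sum.cong[OF refl]) (simp add: hyp_gamma_sum_last assms(4) hyp_gamma_trace)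
  then have crossed: "(\<Sum>k\<in>Basis. \<Sum>p\<in>Basis. hyp_gamma k j p * hyp_gamma p i k)
      = n * fst j * fst i + hyp_gamma (1, 0) i j - hyp_gamma j i (1, 0)"
    by (simp add: sum.distrib sum_subtractf sum_Basis_inner_mult[OF assms(4)] sum_Basis_fst_mult
        n_def)
  have gamma_0: "hyp_gamma (1, 0) i j = 2 * fst i * fst j - i \<bullet> j" "hyp_gamma j i (1, 0) = i \<bullet> j"
    by (simp_all add: hyp_gamma_def inner_Pair_0 inner_commute)
  show ?thesis
    unfolding ricci_hyp_eq_gamma_sums[OF assms(1,2)] sum_Basis_fst_mult trace contracted crossed
      gamma_0
    using assms(1,2) unfolding n_def hyp_g_def by (simp add: field_simps)
qed

lemma scalar_curv_hyp:
  fixes x :: "real \<times> 'b::euclidean_space"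
  assumes "fst x > 0" "l \<noteq> 0"
  shows "scalar_curv (hyp_g l) (hyp_gi l) x = - real DIM('b) * (real DIM('b) + 1) / l^2"
proof -
  have "scalar_curv (hyp_g l) (hyp_gi l) x
      = (\<Sum>i\<in>(Basis :: (real \<times> 'b) set). \<Sum>j\<in>Basis.
           (j \<bullet> i) * ((fst x)^2 / l^2 * (- real DIM('b) / l^2 * hyp_g l x i j)))"
    unfolding scalar_curv_def
    by (intro sum.cong refl) (simp add: ricci_hyp assms hyp_gi_def inner_commute)
  also have "\<dots> = (\<Sum>i\<in>(Basis :: (real \<times> 'b) set). - real DIM('b) / l^2)"
    by (rule sum.cong[OF refl], subst sum_Basis_inner_mult)
       (use assms in \<open>simp_all add: hyp_g_def inner_Basis\<close>)
  finally show ?thesis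
    by simp
qed

lemma hess_hyp:
  fixes x :: "real \<times> 'b::euclidean_space"
  assumes S: "open S" "x \<in> S"
    and F: "\<And>y. y \<in> S \<Longrightarrow> (F has_derivative DF y) (at y)"
    and DF: "((\<lambda>y. DF y j) has_derivative D2F) (at x)"
    and "fst x \<noteq> 0" "l \<noteq> 0" "i \<in> Basis" "j \<in> Basis"
  shows "hess (hyp_g l) (hyp_gi l) F i j x
           = D2F i + (fst i * DF x j + fst j * DF x i - (i \<bullet> j) * DF x (1, 0)) / fst x"
proof -
  have pdF: "pd F k y = DF y k" if "y \<in> S" for y k
    using F[OF that] by (rule pd_eq_has_derivative)
  have "pd (\<lambda>y. pd F j y) i x = D2F i"
    using pd_eq_on_open[OF S pdF] pd_eq_has_derivative[OF DF] by simp
  moreover have "(\<Sum>k\<in>Basis. christoffel (hyp_g l) (hyp_gi l) k i j x * pd F k x)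
      = - (\<Sum>k\<in>Basis. hyp_gamma k i j * DF x k) / fst x"
    unfolding sum_negf[symmetric] sum_divide_distrib
    by (rule sum.cong[OF refl]) (simp add: christoffel_hyp assms pdF[OF S(2)])
  ultimately show ?thesis
    unfolding hess_def hyp_gamma_sum_first[OF assms(7,8)]
    using assms(5) by (simp add: field_simps)
qed

lemma box_hyp:
  fixes x :: "real \<times> 'b::euclidean_space"
  shows "box (hyp_g l) (hyp_gi l) F x
           = (fst x)^2 / l^2 * (\<Sum>i\<in>Basis. hess (hyp_g l) (hyp_gi l) F i i x)"
  unfolding box_def sum_distrib_left
proof (rule sum.cong[OF refl])
  fix i :: "real \<times> 'b"
  assume i: "i \<in> Basis"
  have "(\<Sum>j\<in>Basis. hyp_gi l x i j * hess (hyp_g l) (hyp_gi l) F i j x)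
      = (\<Sum>j\<in>Basis. (j \<bullet> i) * ((fst x)^2 / l^2 * hess (hyp_g l) (hyp_gi l) F i j x))"
    by (rule sum.cong[OF refl]) (simp add: hyp_gi_def inner_commute)
  also have "\<dots> = (fst x)^2 / l^2 * hess (hyp_g l) (hyp_gi l) F i i x"
    by (rule sum_Basis_inner_mult[OF i])
  finally show "(\<Sum>j\<in>Basis. hyp_gi l x i j * hess (hyp_g l) (hyp_gi l) F i j x)
      = (fst x)^2 / l^2 * hess (hyp_g l) (hyp_gi l) F i i x" .
qed

lemma box_hyp_if_hess_conformal:
  fixes x :: "real \<times> 'b::euclidean_space"
  assumes "fst x \<noteq> 0" "l \<noteq> 0"
    and "\<And>i. i \<in> Basis \<Longrightarrow> hess (hyp_g l) (hyp_gi l) F i i x = c * hyp_g l x i i"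
  shows "box (hyp_g l) (hyp_gi l) F x = (real DIM('b) + 1) * c"
proof -
  have "(\<Sum>i\<in>Basis. hess (hyp_g l) (hyp_gi l) F i i x)
      = (\<Sum>i\<in>(Basis :: (real \<times> 'b) set). c * l^2 / (fst x)^2)"
    by (rule sum.cong[OF refl]) (simp add: assms(3) hyp_g_def inner_Basis)
  then show ?thesis
    unfolding box_hyp using assms(1,2) by simp
qed

lemma hyp_gi_quadratic_form:
  fixes x :: "real \<times> 'b::euclidean_space"
  shows "(\<Sum>i\<in>Basis. \<Sum>j\<in>Basis. hyp_gi l x i j * v i * v j)
           = (fst x)^2 / l^2 * (\<Sum>i\<in>Basis. (v i)^2)"
  unfolding sum_distrib_left
proof (rule sum.cong[OF refl])
  fix i :: "real \<times> 'b"
  assume i: "i \<in> Basis"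
  have "(\<Sum>j\<in>Basis. hyp_gi l x i j * v i * v j)
      = (\<Sum>j\<in>Basis. (j \<bullet> i) * ((fst x)^2 / l^2 * v i * v j))"
    by (rule sum.cong[OF refl]) (simp add: hyp_gi_def inner_commute)
  also have "\<dots> = (fst x)^2 / l^2 * (v i)^2"
    unfolding sum_Basis_inner_mult[OF i] by (simp add: power2_eq_square)
  finally show "(\<Sum>j\<in>Basis. hyp_gi l x i j * v i * v j) = (fst x)^2 / l^2 * (v i)^2" .
qed

section \<open>Affine functions of the embedding space\<close>

text \<open>
(z^2 + |zvec - z0|^2 + A) / (K z) is a linear combination of the embedding coordinates
1/z, (z^2 + |zvec|^2) / z and zvec / z of the hyperboloid model, and 2a/K is a constant.
\<close>

definition hyp_affine :: "real \<Rightarrow> real \<Rightarrow> real \<Rightarrow> 'b::euclidean_space \<Rightarrow> real \<times> 'b \<Rightarrow> real" where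
  "hyp_affine K a A z0 y = (fst y + 2 * a + (A + (norm (snd y - z0))^2) / fst y) / K"

definition hyp_affine_deriv ::
  "real \<Rightarrow> real \<Rightarrow> 'b::euclidean_space \<Rightarrow> real \<times> 'b \<Rightarrow> real \<times> 'b \<Rightarrow> real" where
  "hyp_affine_deriv K A z0 y e =
     (fst e * (1 - (A + (norm (snd y - z0))^2) / (fst y)^2)
      + 2 * ((snd y - z0) \<bullet> snd e) / fst y) / K"

lemma has_derivative_hyp_affine:
  assumes "K \<noteq> 0" "fst y \<noteq> 0"
  shows "(hyp_affine K a A z0 has_derivative hyp_affine_deriv K A z0 y) (at y)"
  unfolding hyp_affine_def[abs_def] hyp_affine_deriv_def[abs_def] power2_norm_eq_inner
  using assms
  by (auto intro!: derivative_eq_intros simp: field_simps power2_eq_square inner_commute)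

lemma has_derivative_hyp_affine_deriv:
  assumes "K \<noteq> 0" "fst y \<noteq> 0"
  shows "((\<lambda>y. hyp_affine_deriv K A z0 y j) has_derivative
           (\<lambda>i. (fst j * (2 * (A + (norm (snd y - z0))^2) * fst i / (fst y)^3
                          - 2 * ((snd y - z0) \<bullet> snd i) / (fst y)^2)
                 + 2 * (snd i \<bullet> snd j) / fst y
                 - 2 * ((snd y - z0) \<bullet> snd j) * fst i / (fst y)^2) / K)) (at y)"
  unfolding hyp_affine_deriv_def power2_norm_eq_inner
  using assms
  by (auto intro!: derivative_eq_intros simp: field_simps eval_nat_numeral inner_commute)

lemma hess_hyp_affine:
  fixes x :: "real \<times> 'b::euclidean_space"
  assumes "K \<noteq> 0" "fst x > 0" "l \<noteq> 0" "i \<in> Basis" "j \<in> Basis"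
  shows "hess (hyp_g l) (hyp_gi l) (hyp_affine K a A z0) i j x
           = (hyp_affine K a A z0 x - 2 * a / K) / l^2 * hyp_g l x i j"
proof -
  have "hess (hyp_g l) (hyp_gi l) (hyp_affine K a A z0) i j x
      = (fst j * (2 * (A + (norm (snd x - z0))^2) * fst i / (fst x)^3
                  - 2 * ((snd x - z0) \<bullet> snd i) / (fst x)^2)
         + 2 * (snd i \<bullet> snd j) / fst x
         - 2 * ((snd x - z0) \<bullet> snd j) * fst i / (fst x)^2) / K
        + (fst i * hyp_affine_deriv K A z0 x j + fst j * hyp_affine_deriv K A z0 x i
           - (i \<bullet> j) * hyp_affine_deriv K A z0 x (1, 0)) / fst x"
    by (rule hess_hyp[OF open_fst_pos _ has_derivative_hyp_affine has_derivative_hyp_affine_deriv])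
       (use assms in auto)
  also have "\<dots> = (hyp_affine K a A z0 x - 2 * a / K) / l^2 * hyp_g l x i j"
    unfolding hyp_affine_def hyp_affine_deriv_def hyp_g_def power2_norm_eq_inner
    using assms by (simp add: inner_prod_def field_simps eval_nat_numeral)
  finally show ?thesis .
qed

lemma hyp_norm_grad_hyp_affine:
  fixes x :: "real \<times> 'b::euclidean_space"
  assumes "K \<noteq> 0" "fst x \<noteq> 0"
  shows "(\<Sum>i\<in>Basis. \<Sum>j\<in>Basis.
            hyp_gi l x i j * hyp_affine_deriv K A z0 x i * hyp_affine_deriv K A z0 x j)
           = ((hyp_affine K a A z0 x - 2 * a / K)^2 - 4 * A / K^2) / l^2"
proof -
  define w where "w = snd x - z0"
  define c where "c = 1 - (A + w \<bullet> w) / (fst x)^2"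
  have "w \<bullet> snd i = (0, w) \<bullet> i" for i :: "real \<times> 'b"
    by (cases i) (simp add: inner_prod_def)
  then have "(hyp_affine_deriv K A z0 x i)^2
      = (c^2 * (fst i * fst i) + 4 * c / fst x * (fst i * ((0, w) \<bullet> i))
         + 4 / (fst x)^2 * (((0, w) \<bullet> i) * ((0, w) \<bullet> i))) / K^2" for i
    unfolding hyp_affine_deriv_def power2_norm_eq_inner w_def[symmetric] c_def[symmetric]
    using assms by (simp add: power2_eq_square field_simps)
  then have "(\<Sum>i\<in>Basis. (hyp_affine_deriv K A z0 x i)^2)
      = (c^2 * (\<Sum>i\<in>(Basis :: (real \<times> 'b) set). fst i * fst i)
         + 4 * c / fst x * (\<Sum>i\<in>(Basis :: (real \<times> 'b) set). fst i * ((0, w) \<bullet> i))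
         + 4 / (fst x)^2 * (\<Sum>i\<in>(Basis :: (real \<times> 'b) set). ((0, w) \<bullet> i) * ((0, w) \<bullet> i))) / K^2"
    by (simp add: sum_distrib_left sum_divide_distrib[symmetric] sum.distrib)
  also have "\<dots> = (c^2 + 4 / (fst x)^2 * (w \<bullet> w)) / K^2"
    by (simp add: sum_Basis_fst_mult euclidean_inner[symmetric])
  finally have "(\<Sum>i\<in>Basis. (hyp_affine_deriv K A z0 x i)^2)
      = (c^2 + 4 / (fst x)^2 * (w \<bullet> w)) / K^2" .
  moreover have "(fst x)^2 * ((c^2 + 4 / (fst x)^2 * (w \<bullet> w)) / K^2)
      = (hyp_affine K a A z0 x - 2 * a / K)^2 - 4 * A / K^2"
    unfolding hyp_affine_def power2_norm_eq_inner w_def[symmetric]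
    using assms by (simp add: c_def field_simps power2_eq_square)
  ultimately show ?thesis
    unfolding hyp_gi_quadratic_form by (metis times_divide_eq_left)
qed

lemma open_hyp_affine_pos:
  assumes "K \<noteq> 0"
  shows "open {y :: real \<times> 'b::euclidean_space. fst y > 0 \<and> hyp_affine K a A z0 y > 0}"
proof -
  have "continuous_on {y. fst y > 0} (hyp_affine K a A z0)"
    unfolding hyp_affine_def using assms by (intro continuous_intros) auto
  then have "open ({y. fst y > 0} \<inter> hyp_affine K a A z0 -` {0<..})"
    by (intro continuous_open_preimage open_fst_pos) auto
  moreover have "{y. fst y > 0} \<inter> hyp_affine K a A z0 -` {0<..}
      = {y. fst y > 0 \<and> hyp_affine K a A z0 y > 0}"
    by auto
  ultimately show ?thesis
    by simp
qed

lemma box_hyp_affine_powr: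
  fixes x :: "real \<times> 'b::euclidean_space"
  assumes "K \<noteq> 0" "l \<noteq> 0" "fst x > 0" "hyp_affine K a A z0 x > 0"
  defines "u \<equiv> hyp_affine K a A z0 x"
  shows "box (hyp_g l) (hyp_gi l) (\<lambda>y. hyp_affine K a A z0 y powr q) x
           = q * u powr (q - 2) / l^2
             * ((real DIM('b) + 1) * u * (u - 2 * a / K) + (q - 1) * ((u - 2 * a / K)^2 - 4 * A / K^2))"
proof -
  let ?U = "hyp_affine K a A z0"
  let ?DU = "hyp_affine_deriv K A z0"
  have box_U: "box (hyp_g l) (hyp_gi l) ?U x = (real DIM('b) + 1) * ((u - 2 * a / K) / l^2)"
    unfolding u_def by (rule box_hyp_if_hess_conformal) (use assms hess_hyp_affine in simp_all)
  have grad_U: "(\<Sum>i\<in>Basis. \<Sum>j\<in>Basis. hyp_gi l x i j * ?DU x i * ?DU x j)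
      = ((u - 2 * a / K)^2 - 4 * A / K^2) / l^2"
    unfolding u_def by (rule hyp_norm_grad_hyp_affine) (use assms in simp_all)
  have "u powr (q - 1) = u powr ((q - 2) + 1)" "u powr (q - 1 - 1) = u powr (q - 2)"
    by (rule arg_cong[where f="\<lambda>e. u powr e"], simp)+
  then have powers: "u powr (q - 1) = u powr (q - 2) * u" "u powr (q - 1 - 1) = u powr (q - 2)"
    using assms(4) unfolding powr_add u_def by simp_all
  have "box (hyp_g l) (hyp_gi l) (\<lambda>y. ?U y powr q) x
      = q * u powr (q - 1) * box (hyp_g l) (hyp_gi l) ?U x
        + q * ((q - 1) * u powr (q - 1 - 1))
          * (\<Sum>i\<in>Basis. \<Sum>j\<in>Basis. hyp_gi l x i j * ?DU x i * ?DU x j)"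
    unfolding u_def
  proof (rule box_compose[OF open_hyp_affine_pos[OF assms(1)] _ has_derivative_hyp_affine
        has_derivative_hyp_affine_deriv[OF assms(1)]])
    show "((\<lambda>t. q * t powr (q - 1)) has_real_derivative q * ((q - 1) * ?U x powr (q - 1 - 1)))
            (at (?U x))"
      using assms(4) by (intro DERIV_cmult has_real_derivative_powr)
  qed (use assms has_real_derivative_powr in auto)
  also have "\<dots> = q * u powr (q - 2) / l^2
      * ((real DIM('b) + 1) * u * (u - 2 * a / K) + (q - 1) * ((u - 2 * a / K)^2 - 4 * A / K^2))"
    unfolding box_U grad_U powers using assms(1,2) by (simp add: field_simps)
  finally show ?thesis .
qed

section \<open>Expansion at the conformal boundary\<close>

lemma has_real_derivative_smallo:
  fixes g :: "real \<Rightarrow> real"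
  assumes "(g has_real_derivative g') (at 0)" "filterlim z (at 0) F"
  shows "(\<lambda>r. g (z r) - g 0 - g' * z r) \<in> o[F](z)"
proof (rule smalloI_tendsto)
  have "((\<lambda>h. (g h - g 0) / h) \<longlongrightarrow> g') (at 0)"
    using assms(1) unfolding has_field_derivative_iff by simp
  then have "((\<lambda>h. (g h - g 0) / h - g') \<longlongrightarrow> g' - g') (at 0)"
    by (intro tendsto_diff tendsto_const)
  then have "((\<lambda>h. (g h - g 0) / h - g') \<longlongrightarrow> 0) (at 0)"
    by simp
  then have "((\<lambda>h. (g h - g 0 - g' * h) / h) \<longlongrightarrow> 0) (at 0)"
    by (rule Lim_transform_eventually) (auto simp: eventually_at_filter field_simps)
  from filterlim_compose[OF this assms(2)]
  show "((\<lambda>r. (g (z r) - g 0 - g' * z r) / z r) \<longlongrightarrow> 0) F" .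
  show "eventually (\<lambda>r. z r \<noteq> 0) F"
    using assms(2) by (simp add: filterlim_at)
qed

lemma has_real_derivative_powr_quotient:
  fixes K D a p :: real
  assumes K: "K > 0" and D: "D > 0"
  shows "((\<lambda>t. (K / (t^2 + 2 * a * t + D)) powr p) has_real_derivative
           - 2 * p * a / D * (K / D) powr p) (at 0)"
proof -
  have "((\<lambda>t. K / (t^2 + 2 * a * t + D)) has_real_derivative - K * (2 * a) / D^2) (at 0)"
    using D by (auto intro!: derivative_eq_intros simp: power2_eq_square)
  moreover have "((\<lambda>s. s powr p) has_real_derivative p * (K / D) powr (p - 1))
      (at ((\<lambda>t. K / (t^2 + 2 * a * t + D)) 0))"
    using has_real_derivative_powr[of "K / D" p] K D by simp
  ultimately have "((\<lambda>t. (K / (t^2 + 2 * a * t + D)) powr p) has_real_derivative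
      p * (K / D) powr (p - 1) * (- K * (2 * a) / D^2)) (at 0)"
    by (rule DERIV_chain2[rotated])
  moreover have "p * (K / D) powr (p - 1) * (- K * (2 * a) / D^2)
      = - 2 * p * a / D * (K / D) powr p"
    using K D by (simp add: powr_diff field_simps power2_eq_square)
  ultimately show ?thesis
    by simp
qed

lemma powr_rational_expansion:
  fixes K D a p :: real
  assumes K: "K > 0" and D: "D > 0" and z: "filterlim z (at_right 0) F"
  shows "(\<lambda>r. (K * z r / ((z r)^2 + 2 * a * z r + D)) powr p
            - (z r powr p * (K / D) powr p + z r powr p * z r * (- 2 * p * a / D * (K / D) powr p)))
         \<in> o[F](\<lambda>r. z r powr p * z r)"
proof -
  define g where "g = (\<lambda>t. (K / (t^2 + 2 * a * t + D)) powr p)"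
  define g' where "g' = - 2 * p * a / D * (K / D) powr p"
  have "(g has_real_derivative g') (at 0)"
    unfolding g_def g'_def using K D by (rule has_real_derivative_powr_quotient)
  moreover have "filterlim z (at 0) F"
    using z by (rule filterlim_mono) (simp_all add: at_le)
  ultimately have "(\<lambda>r. g (z r) - g 0 - g' * z r) \<in> o[F](z)"
    by (rule has_real_derivative_smallo)
  then have smallo: "(\<lambda>r. z r powr p * (g (z r) - g 0 - g' * z r)) \<in> o[F](\<lambda>r. z r powr p * z r)"
    by (rule landau_o.small.mult_left)
  have "eventually (\<lambda>r. z r > 0 \<and> (z r)^2 + 2 * a * z r + D > 0) F"
  proof -
    have "(z \<longlongrightarrow> 0) F"
      using z by (simp add: filterlim_at)
    then have "((\<lambda>r. (z r)^2 + 2 * a * z r + D) \<longlongrightarrow> 0^2 + 2 * a * 0 + D) F"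
      by (intro tendsto_intros)
    then have "eventually (\<lambda>r. (z r)^2 + 2 * a * z r + D > 0) F"
      using D by (simp add: order_tendstoD(1))
    moreover have "eventually (\<lambda>r. z r > 0) F"
      using z unfolding filterlim_at by (auto elim: eventually_mono)
    ultimately show ?thesis
      by eventually_elim simp
  qed
  then have ev: "eventually (\<lambda>r. z r powr p * (g (z r) - g 0 - g' * z r)
      = (K * z r / ((z r)^2 + 2 * a * z r + D)) powr p
        - (z r powr p * (K / D) powr p + z r powr p * z r * g')) F"
    by eventually_elim (use K in \<open>simp add: g_def powr_mult[symmetric] algebra_simps\<close>)
  show ?thesis
    using landau_o.small.in_cong[OF ev] smallo unfolding g'_def by blast
qed

lemma deriv_powr_potential:
  fixes d pm \<alpha> :: real
  assumes "d > 1" "pm > 0"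
  shows "deriv (\<lambda>p. - \<alpha> * (d - 1) / (2 * d) * p powr (2 * d / (d - 1))) pm
           = - \<alpha> * pm powr ((d + 1) / (d - 1))"
proof -
  have "((\<lambda>p. - \<alpha> * (d - 1) / (2 * d) * p powr (2 * d / (d - 1))) has_real_derivative
          - \<alpha> * (d - 1) / (2 * d) * (2 * d / (d - 1) * pm powr (2 * d / (d - 1) - 1))) (at pm)"
    by (intro DERIV_cmult has_real_derivative_powr assms(2))
  moreover have "2 * d / (d - 1) - 1 = (d + 1) / (d - 1)"
    using assms(1) by (simp add: field_simps)
  ultimately show ?thesis
    using assms(1) by (simp add: DERIV_imp_deriv)
qed

section \<open>The solution\<close>

definition sol_scale :: "real \<Rightarrow> real \<Rightarrow> real \<Rightarrow> real \<Rightarrow> real" where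
  "sol_scale d l lam b = (d - 1) * b / (l * sqrt \<bar>lam\<bar>)"

context
  fixes d l lam a b :: real and z0 :: "'b::euclidean_space"
  assumes d: "d > 1" and l: "l > 0" and lam: "lam \<noteq> 0" and b: "b > 0"
begin

abbreviation sol_affine :: "real \<times> 'b \<Rightarrow> real" where
  "sol_affine \<equiv> hyp_affine (sol_scale d l lam b) a (a^2 - sgn lam * b^2) z0"

lemma sol_scale_pos: "sol_scale d l lam b > 0"
  using d l lam b by (simp add: sol_scale_def)

lemma phi_rhs_eq_inverse_sol_affine:
  assumes "fst y \<noteq> 0"
  shows "phi_rhs d l lam a b z0 y = 1 / sol_affine y"
  using assms unfolding phi_rhs_def hyp_affine_def sol_scale_def
  by (simp add: field_simps power2_eq_square)

lemma sol_domain_eq: "sol_domain d l lam a b z0 = {y. fst y > 0 \<and> sol_affine y > 0}"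
  unfolding sol_domain_def using phi_rhs_eq_inverse_sol_affine by force

lemma open_sol_domain: "open (sol_domain d l lam a b z0)"
  unfolding sol_domain_eq using sol_scale_pos by (intro open_hyp_affine_pos) simp

lemma conf_phi_eq_sol_affine_powr:
  assumes "y \<in> sol_domain d l lam a b z0"
  shows "conf_phi d l lam a b z0 y = sol_affine y powr (- ((d - 1) / 2))"
  using assms unfolding sol_domain_eq conf_phi_def
  by (simp add: phi_rhs_eq_inverse_sol_affine powr_divide powr_minus_divide)

lemma powr_conf_phi_eq_sol_affine:
  assumes "y \<in> sol_domain d l lam a b z0"
  shows "conf_phi d l lam a b z0 y powr (-2 / (d - 1)) = sol_affine y"
proof -
  have exponent: "- ((d - 1) / 2) * (-2 / (d - 1)) = 1"
    using d by (simp add: field_simps)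
  show ?thesis
    unfolding conf_phi_eq_sol_affine_powr[OF assms] powr_powr exponent
    using assms by (simp add: sol_domain_eq)
qed

lemma sol_scale_coupling:
  "(d + 1) / (d - 1) * lam = (d^2 - 1) / (4 * l^2) * (4 * sgn lam * b^2 / (sol_scale d l lam b)^2)"
proof -
  have "(sol_scale d l lam b)^2 = (d - 1)^2 * b^2 / (l^2 * \<bar>lam\<bar>)"
    using lam by (simp add: sol_scale_def power_divide power_mult_distrib)
  then have "4 * sgn lam * b^2 / (sol_scale d l lam b)^2 = 4 * (sgn lam * \<bar>lam\<bar>) * l^2 / (d - 1)^2"
    using d l b by (simp add: field_simps)
  moreover have "d^2 - 1 = (d - 1) * (d + 1)" "(d - 1)^2 = (d - 1) * (d - 1)"
    by (simp_all add: algebra_simps power2_eq_square)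
  ultimately show ?thesis
    using d l by (simp add: sgn_mult_abs)
qed

lemma stressT_conf_phi:
  assumes "real DIM('b) = d" "x \<in> sol_domain d l lam a b z0" "i \<in> Basis" "j \<in> Basis"
  shows "stressT (hyp_g l) (hyp_gi l) d \<kappa> (conf_phi d l lam a b z0) i j x = 0"
proof -
  let ?F = "\<lambda>y. conf_phi d l lam a b z0 y powr (-2 / (d - 1))"
  define c where "c = (sol_affine x - 2 * a / sol_scale d l lam b) / l^2"
  have x: "fst x > 0"
    using assms(2) by (simp add: sol_domain_eq)
  have hess: "hess (hyp_g l) (hyp_gi l) ?F i' j' x = c * hyp_g l x i' j'"
    if "i' \<in> Basis" "j' \<in> Basis" for i' j'
    using hess_eq_on_open[OF open_sol_domain assms(2) powr_conf_phi_eq_sol_affine]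
      hess_hyp_affine[OF _ x _ that] sol_scale_pos l
    unfolding c_def by simp
  have "box (hyp_g l) (hyp_gi l) ?F x = (d + 1) * c"
    using box_hyp_if_hess_conformal[OF _ _ hess] x l assms(1) by simp
  then show ?thesis
    unfolding stressT_def hess[OF assms(3,4)] using d by simp
qed

lemma conf_phi_field_equation:
  assumes "real DIM('b) = d" and x: "x \<in> sol_domain d l lam a b z0"
  shows "box (hyp_g l) (hyp_gi l) (conf_phi d l lam a b z0) x
           - (d - 1) / (4 * d) * scalar_curv (hyp_g l) (hyp_gi l) x * conf_phi d l lam a b z0 x
           - (d + 1) / (d - 1) * lam * conf_phi d l lam a b z0 x powr ((d + 3) / (d - 1)) = 0"
proof -
  define K where "K = sol_scale d l lam b"
  define A where "A = a^2 - sgn lam * b^2"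
  define p where "p = (d - 1) / 2"
  define u where "u = hyp_affine K a A z0 x"
  define v where "v = u - 2 * a / K"
  define P where "P = u powr (- p - 2)"
  have K: "K \<noteq> 0"
    using sol_scale_pos unfolding K_def by simp
  have x_pos: "fst x > 0" "u > 0"
    using x by (simp_all add: sol_domain_eq u_def K_def A_def)
  have phi: "conf_phi d l lam a b z0 y = hyp_affine K a A z0 y powr (- p)"
    if "y \<in> sol_domain d l lam a b z0" for y
    using conf_phi_eq_sol_affine_powr[OF that] by (simp add: K_def A_def p_def)
  have "box (hyp_g l) (hyp_gi l) (conf_phi d l lam a b z0) x
      = box (hyp_g l) (hyp_gi l) (\<lambda>y. hyp_affine K a A z0 y powr (- p)) x"
    by (rule box_eq_on_open[OF open_sol_domain x phi])
  also have "\<dots> = - p * P / l^2 * ((real DIM('b) + 1) * u * v + (- p - 1) * (v^2 - 4 * A / K^2))"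
    unfolding P_def v_def u_def
    by (rule box_hyp_affine_powr) (use x_pos l K in \<open>simp_all add: u_def\<close>)
  finally have box_phi: "box (hyp_g l) (hyp_gi l) (conf_phi d l lam a b z0) x
      = - p * P / l^2 * ((d + 1) * u * v + (- p - 1) * (v^2 - 4 * A / K^2))"
    unfolding assms(1) .
  have scalar: "scalar_curv (hyp_g l) (hyp_gi l) x = - d * (d + 1) / l^2"
    using scalar_curv_hyp[OF x_pos(1)] l assms(1) by simp
  have "u powr (- p) = u powr ((- p - 2) + 2)"
    by (rule arg_cong[where f="\<lambda>e. u powr e"]) simp
  then have phi_x: "conf_phi d l lam a b z0 x = P * u^2"
    using x_pos(2) unfolding phi[OF x] u_def[symmetric] powr_add P_def by simp
  have "- p * ((d + 3) / (d - 1)) = - p - 2"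
    using d by (simp add: p_def field_simps)
  then have phi_power: "conf_phi d l lam a b z0 x powr ((d + 3) / (d - 1)) = P"
    unfolding phi[OF x] powr_powr u_def[symmetric] P_def by simp
  have grad_identity: "v^2 - 4 * A / K^2 = 2 * u * v - u^2 + 4 * sgn lam * b^2 / K^2"
    using K by (simp add: v_def A_def field_simps power2_eq_square)
  have coupling: "(d + 1) / (d - 1) * lam = (d^2 - 1) / (4 * l^2) * (4 * sgn lam * b^2 / K^2)"
    unfolding K_def by (rule sol_scale_coupling)
  show ?thesis
    unfolding coupling phi_power
    unfolding box_phi grad_identity scalar phi_x p_def
    using d l K by (simp add: field_simps power2_eq_square)
qed

lemma phi_minus_eq:
  "phi_minus d l lam a b z0 zv
     = (sol_scale d l lam b / (- sgn lam * b^2 + a^2 + (norm (zv - z0))^2)) powr ((d - 1) / 2)"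
  unfolding phi_minus_def sol_scale_def by simp

lemma phi_plus_eq:
  assumes "- sgn lam * b^2 + a^2 + (norm (zv - z0))^2 > 0"
  shows "- l * (sqrt \<bar>lam\<bar> * a / b) * phi_minus d l lam a b z0 zv powr ((d + 1) / (d - 1))
           = - (d - 1) * a / (- sgn lam * b^2 + a^2 + (norm (zv - z0))^2)
             * phi_minus d l lam a b z0 zv"
proof -
  define K where "K = sol_scale d l lam b"
  define D where "D = - sgn lam * b^2 + a^2 + (norm (zv - z0))^2"
  have "(d - 1) / 2 * ((d + 1) / (d - 1)) = (d - 1) / 2 + 1"
    using d by (simp add: field_simps)
  then have pm_pow: "phi_minus d l lam a b z0 zv powr ((d + 1) / (d - 1))
      = phi_minus d l lam a b z0 zv * (K / D)"
    unfolding phi_minus_eq powr_powr K_def[symmetric] D_def[symmetric]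
    using sol_scale_pos assms by (simp add: powr_add K_def D_def)
  have coeff: "l * (sqrt \<bar>lam\<bar> * a / b) * K = (d - 1) * a"
    using l lam b unfolding K_def sol_scale_def by simp
  have "- l * (sqrt \<bar>lam\<bar> * a / b) * (phi_minus d l lam a b z0 zv * (K / D))
      = - (l * (sqrt \<bar>lam\<bar> * a / b) * K) / D * phi_minus d l lam a b z0 zv"
    by (simp add: field_simps)
  then show ?thesis
    unfolding pm_pow coeff D_def[symmetric] by (simp add: algebra_simps)
qed

lemma conf_phi_boundary_expansion:
  assumes "- sgn lam * b^2 + a^2 + (norm (zv - z0))^2 > 0"
  shows "(\<lambda>r. conf_phi d l lam a b z0 (exp (- r / l), zv)
            - (exp (- (d - 1) * r / (2 * l)) * phi_minus d l lam a b z0 zv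
               + exp (- (d + 1) * r / (2 * l)) * (- l * (sqrt \<bar>lam\<bar> * a / b)
                   * phi_minus d l lam a b z0 zv powr ((d + 1) / (d - 1)))))
         \<in> o[at_top](\<lambda>r. exp (- (d + 1) * r / (2 * l)))"
proof -
  define K where "K = sol_scale d l lam b"
  define D where "D = - sgn lam * b^2 + a^2 + (norm (zv - z0))^2"
  define p where "p = (d - 1) / 2"
  define z where "z = (\<lambda>r::real. exp (- r / l))"
  have K: "K > 0" and D: "D > 0"
    using sol_scale_pos assms by (simp_all add: K_def D_def)
  have "filterlim z (at_right 0) at_top"
    unfolding z_def using l by real_asymp
  moreover have "- 2 * p * a / D = - (d - 1) * a / D"
    using D unfolding p_def by (simp add: field_simps)
  ultimately have "(\<lambda>r. (K * z r / ((z r)^2 + 2 * a * z r + D)) powr p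
            - (z r powr p * (K / D) powr p + z r powr p * z r * (- (d - 1) * a / D * (K / D) powr p)))
         \<in> o[at_top](\<lambda>r. z r powr p * z r)"
    using powr_rational_expansion[OF K D, of z at_top a p] by simp
  moreover have "z r powr p = exp (- (d - 1) * r / (2 * l))"
    "z r powr p * z r = exp (- (d + 1) * r / (2 * l))" for r
    unfolding z_def p_def powr_def using l by (simp_all add: field_simps flip: exp_add)
  moreover have "conf_phi d l lam a b z0 (exp (- r / l), zv)
      = (K * z r / ((z r)^2 + 2 * a * z r + D)) powr p" for r
    unfolding conf_phi_def phi_rhs_def K_def D_def sol_scale_def z_def p_def
    by (simp add: power2_eq_square algebra_simps)
  moreover have "phi_minus d l lam a b z0 zv = (K / D) powr p"
    unfolding phi_minus_eq K_def D_def p_def ..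
  ultimately show ?thesis
    unfolding phi_plus_eq[OF assms] D_def[symmetric] by simp
qed

lemma phi_minus_pos:
  assumes "- sgn lam * b^2 + a^2 + (norm (zv - z0))^2 > 0"
  shows "phi_minus d l lam a b z0 zv > 0"
  using sol_scale_pos assms unfolding phi_minus_eq by simp

end

theorem mainTheorem12:
  fixes l lam a b :: real and z0 :: "real ^ 'n"
  defines "d \<equiv> real CARD('n)"
  assumes "CARD('n) \<ge> 2" and "l > 0" and "lam \<noteq> 0" and "b > 0"
  shows
   "(\<forall>x \<in> sol_domain d l lam a b z0. \<forall>i \<in> Basis. \<forall>j \<in> Basis.
        (\<forall>\<kappa>. stressT (hyp_g l) (hyp_gi l) d \<kappa> (conf_phi d l lam a b z0) i j x = 0)
      \<and> ricci (hyp_g l) (hyp_gi l) i j x + d / l^2 * hyp_g l x i j = 0)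
  \<and> (\<forall>x \<in> sol_domain d l lam a b z0.
        box (hyp_g l) (hyp_gi l) (conf_phi d l lam a b z0) x
        - (d - 1) / (4 * d) * scalar_curv (hyp_g l) (hyp_gi l) x * conf_phi d l lam a b z0 x
        - (d + 1) / (d - 1) * lam * conf_phi d l lam a b z0 x powr ((d + 3) / (d - 1)) = 0)
  \<and> (\<forall>zv :: real ^ 'n. - sgn lam * b^2 + a^2 + (norm (zv - z0))^2 > 0 \<longrightarrow>
       (let \<alpha> = sqrt \<bar>lam\<bar> * a / b;
            pm = phi_minus d l lam a b z0 zv;
            pp = - l * \<alpha> * pm powr ((d + 1) / (d - 1));
            pihat = - (1 / l) * pp;
            f = (\<lambda>p::real. - \<alpha> * (d - 1) / (2 * d) * p powr (2 * d / (d - 1)))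
        in (\<lambda>r. conf_phi d l lam a b z0 (exp (- r / l), zv)
                 - (exp (- (d - 1) * r / (2 * l)) * pm
                    + exp (- (d + 1) * r / (2 * l)) * pp))
             \<in> o[at_top](\<lambda>r. exp (- (d + 1) * r / (2 * l)))
           \<and> pihat = \<alpha> * pm powr ((d + 1) / (d - 1))
           \<and> - pihat - deriv f pm = 0))"
proof -
  have d: "d > 1" and dim: "real DIM(real ^ 'n) = d"
    using assms(2) unfolding d_def by simp_all
  note sol = d assms(3-5)
  have ricci: "ricci (hyp_g l) (hyp_gi l) i j x + d / l^2 * hyp_g l x i j = 0"
    if "x \<in> sol_domain d l lam a b z0" "i \<in> Basis" "j \<in> Basis" for x i j
    using ricci_hyp[of x l i j] that assms(3) dim by (simp add: sol_domain_def)
  have mixed_bc: "deriv (\<lambda>p. - (sqrt \<bar>lam\<bar> * a / b) * (d - 1) / (2 * d) * p powr (2 * d / (d - 1)))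
      (phi_minus d l lam a b z0 zv)
      = - (sqrt \<bar>lam\<bar> * a / b) * phi_minus d l lam a b z0 zv powr ((d + 1) / (d - 1))"
    if "- sgn lam * b^2 + a^2 + (norm (zv - z0))^2 > 0" for zv
    using deriv_powr_potential[OF d phi_minus_pos[OF sol that]] .
  show ?thesis
    unfolding Let_def
    using stressT_conf_phi[OF sol dim] ricci conf_phi_field_equation[OF sol dim]
      conf_phi_boundary_expansion[OF sol] mixed_bc assms(3)
    by auto
qed

end
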